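(* Let $\Gamma=(V,\nu,\mu)$ be a fuzzy graph on $n$ vertices with fuzzy complement $\overline{\Gamma}$. For $v\in V$ put $d_{\max}(v)=\sum_{u\ne v}\min(\nu(v),\nu(u))$, $\lambda_{\max}=\frac1n\sum_{v\in V}d_{\max}(v)$, $e(v)=d_{\max}(v)-\lambda_{\max}$, and $E=\frac1n\sum_{v\in V}e(v)^2$. Then $$2\,\sigma^*(\Gamma)+E-2\sqrt{\sigma^*(\Gamma)\,E}\;\le\;\sigma^*(\Gamma)+\sigma^*(\overline{\Gamma})\;\le\;2\,\sigma^*(\Gamma)+E+2\sqrt{\sigma^*(\Gamma)\,E}.$$
   Context: A fuzzy graph $\Gamma=(V,\nu,\mu)$ consists of a finite vertex set $V$ with $|V|=n\ge1$, a map $\nu:V\to[0,1]$, and a symmetric map $\mu:V\times V\to[0,1]$ with $\mu(u,v)\le\min(\nu(u),\nu(v))$. The fuzzy degree is $d_\Gamma(v)=\sum_{u\ne v}\mu(v,u)$, the fuzzy size is $\mathrm{ew}(\Gamma)=\frac12\sum_v d_\Gamma(v)$, $\lambda=2\,\mathrm{ew}(\Gamma)/n$, and the fuzzy sigma index is $\sigma^*(\Gamma)=\frac1n\sum_{v}(d_\Gamma(v)-\lambda)^2$. The fuzzy complement $\overline{\Gamma}=(V,\nu,\overline{\mu})$ has $\overline{\mu}(u,v)=\min(\nu(u),\nu(v))-\mu(u,v)$ for $u\ne v$. *)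

theory Defs
  imports Complex_Main
begin

definition fuzzy_graph :: "'a set \<Rightarrow> ('a \<Rightarrow> real) \<Rightarrow> ('a \<Rightarrow> 'a \<Rightarrow> real) \<Rightarrow> bool" where
  "fuzzy_graph V \<nu> \<mu> \<longleftrightarrow> finite V \<and> V \<noteq> {} \<and>
     (\<forall>v\<in>V. 0 \<le> \<nu> v \<and> \<nu> v \<le> 1) \<and>
     (\<forall>u\<in>V. \<forall>v\<in>V. 0 \<le> \<mu> u v \<and> \<mu> u v \<le> 1 \<and> \<mu> u v = \<mu> v u \<and> \<mu> u v \<le> min (\<nu> u) (\<nu> v))"

definition fdeg :: "'a set \<Rightarrow> ('a \<Rightarrow> 'a \<Rightarrow> real) \<Rightarrow> 'a \<Rightarrow> real" where
  "fdeg V \<mu> v = (\<Sum>u\<in>V - {v}. \<mu> v u)"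

definition fsize :: "'a set \<Rightarrow> ('a \<Rightarrow> 'a \<Rightarrow> real) \<Rightarrow> real" where
  "fsize V \<mu> = (\<Sum>v\<in>V. fdeg V \<mu> v) / 2"

definition flambda :: "'a set \<Rightarrow> ('a \<Rightarrow> 'a \<Rightarrow> real) \<Rightarrow> real" where
  "flambda V \<mu> = 2 * fsize V \<mu> / real (card V)"

definition fsigma :: "'a set \<Rightarrow> ('a \<Rightarrow> 'a \<Rightarrow> real) \<Rightarrow> real" where
  "fsigma V \<mu> = (\<Sum>v\<in>V. (fdeg V \<mu> v - flambda V \<mu>)^2) / real (card V)"

text \<open>Fuzzy complement edge function (only values with u \<noteq> v matter).\<close>
definition fcompl :: "('a \<Rightarrow> real) \<Rightarrow> ('a \<Rightarrow> 'a \<Rightarrow> real) \<Rightarrow> 'a \<Rightarrow> 'a \<Rightarrow> real" where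
  "fcompl \<nu> \<mu> u v = (if u = v then 0 else min (\<nu> u) (\<nu> v) - \<mu> u v)"

end

theory Submission
  imports Defs "HOL-Analysis.Convex"
begin

text \<open>The degree of a vertex in the complement is \<open>d\<^sub>m\<^sub>a\<^sub>x(v) - d(v)\<close>, so the degree
  sequence of the complement is the difference of the sequences \<open>d\<^sub>m\<^sub>a\<^sub>x\<close> and \<open>d\<close>.
  The variance of a difference is \<open>Var d\<^sub>m\<^sub>a\<^sub>x + Var d - 2 Cov(d, d\<^sub>m\<^sub>a\<^sub>x)\<close>, hence
  \<open>\<sigma>*(\<Gamma>) + \<sigma>*(\<Gamma>\<^sup>c) = 2 \<sigma>*(\<Gamma>) + E - 2 Cov(d, d\<^sub>m\<^sub>a\<^sub>x)\<close>, and Cauchy-Schwarz bounds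
  the covariance in absolute value by \<open>sqrt (\<sigma>*(\<Gamma>) E)\<close>.\<close>

definition pop_mean :: "'a set \<Rightarrow> ('a \<Rightarrow> real) \<Rightarrow> real" where
  "pop_mean V f = (\<Sum>v\<in>V. f v) / real (card V)"

definition pop_var :: "'a set \<Rightarrow> ('a \<Rightarrow> real) \<Rightarrow> real" where
  "pop_var V f = (\<Sum>v\<in>V. (f v - pop_mean V f)^2) / real (card V)"

definition pop_cov :: "'a set \<Rightarrow> ('a \<Rightarrow> real) \<Rightarrow> ('a \<Rightarrow> real) \<Rightarrow> real" where
  "pop_cov V f g = (\<Sum>v\<in>V. (f v - pop_mean V f) * (g v - pop_mean V g)) / real (card V)"

lemma pop_mean_diff: "pop_mean V (\<lambda>v. f v - g v) = pop_mean V f - pop_mean V g"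
  by (simp add: pop_mean_def sum_subtractf diff_divide_distrib)

lemma pop_cov_commute: "pop_cov V g f = pop_cov V f g"
  by (simp add: pop_cov_def mult.commute)

lemma pop_var_cong: "(\<And>v. v \<in> V \<Longrightarrow> f v = g v) \<Longrightarrow> pop_var V f = pop_var V g"
  by (simp add: pop_var_def pop_mean_def cong: sum.cong)

lemma pop_var_diff:
  "pop_var V (\<lambda>v. f v - g v) = pop_var V f + pop_var V g - 2 * pop_cov V f g"
proof -
  let ?a = "\<lambda>v. f v - pop_mean V f" and ?b = "\<lambda>v. g v - pop_mean V g"
  have "(\<Sum>v\<in>V. (f v - g v - pop_mean V (\<lambda>v. f v - g v))^2)
        = (\<Sum>v\<in>V. (?a v)^2 + (?b v)^2 - 2 * (?a v * ?b v))"
    by (intro sum.cong) (simp_all add: pop_mean_diff power2_eq_square algebra_simps)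
  also have "\<dots> = (\<Sum>v\<in>V. (?a v)^2) + (\<Sum>v\<in>V. (?b v)^2) - 2 * (\<Sum>v\<in>V. ?a v * ?b v)"
    by (simp add: sum.distrib sum_subtractf sum_distrib_left)
  finally show ?thesis
    by (simp add: pop_var_def pop_cov_def add_divide_distrib diff_divide_distrib)
qed

lemma pop_cov_squared_le: "(pop_cov V f g)^2 \<le> pop_var V f * pop_var V g"
  unfolding pop_cov_def pop_var_def power_divide
  by (simp add: divide_right_mono power2_eq_square[of "real (card V)", symmetric]
      Cauchy_Schwarz_ineq_sum)

lemma abs_pop_cov_le: "\<bar>pop_cov V f g\<bar> \<le> sqrt (pop_var V f * pop_var V g)"
  using real_sqrt_le_mono[OF pop_cov_squared_le] by simp

lemma pop_var_add_pop_var_diff_bounds: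
  shows "2 * pop_var V f + pop_var V g - 2 * sqrt (pop_var V f * pop_var V g)
           \<le> pop_var V f + pop_var V (\<lambda>v. g v - f v)"
    and "pop_var V f + pop_var V (\<lambda>v. g v - f v)
           \<le> 2 * pop_var V f + pop_var V g + 2 * sqrt (pop_var V f * pop_var V g)"
  using abs_pop_cov_le[of V f g] pop_var_diff[of V g f]
  by (simp_all add: pop_cov_commute abs_le_iff)

lemma fsigma_eq_pop_var: "fsigma V \<mu> = pop_var V (fdeg V \<mu>)"
  by (simp add: fsigma_def pop_var_def pop_mean_def flambda_def fsize_def)

lemma fdeg_fcompl:
  "v \<in> V \<Longrightarrow> fdeg V (fcompl \<nu> \<mu>) v = (\<Sum>u\<in>V - {v}. min (\<nu> v) (\<nu> u)) - fdeg V \<mu> v"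
  unfolding fdeg_def sum_subtractf[symmetric] by (rule sum.cong) (auto simp: fcompl_def)

theorem corollary2p13:
  fixes V :: "'a set" and \<nu> :: "'a \<Rightarrow> real" and \<mu> :: "'a \<Rightarrow> 'a \<Rightarrow> real"
  assumes "fuzzy_graph V \<nu> \<mu>"
  defines "dmax \<equiv> \<lambda>v. (\<Sum>u\<in>V - {v}. min (\<nu> v) (\<nu> u))"
  defines "lmax \<equiv> (\<Sum>v\<in>V. dmax v) / real (card V)"
  defines "e \<equiv> \<lambda>v. dmax v - lmax"
  defines "E \<equiv> (\<Sum>v\<in>V. (e v)^2) / real (card V)"
  shows "2 * fsigma V \<mu> + E - 2 * sqrt (fsigma V \<mu> * E)
           \<le> fsigma V \<mu> + fsigma V (fcompl \<nu> \<mu>)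
         \<and> fsigma V \<mu> + fsigma V (fcompl \<nu> \<mu>)
           \<le> 2 * fsigma V \<mu> + E + 2 * sqrt (fsigma V \<mu> * E)"
proof -
  have "fsigma V (fcompl \<nu> \<mu>) = pop_var V (\<lambda>v. dmax v - fdeg V \<mu> v)"
    unfolding fsigma_eq_pop_var by (rule pop_var_cong) (simp add: fdeg_fcompl dmax_def)
  moreover have "E = pop_var V dmax"
    by (simp add: E_def e_def lmax_def pop_var_def pop_mean_def)
  ultimately show ?thesis
    using pop_var_add_pop_var_diff_bounds[of V "fdeg V \<mu>" dmax]
    by (simp add: fsigma_eq_pop_var)
qed

end
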